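(* Let $H$ be a binary tree based graph, $M$ a pseudomatching of $H$, $S$ a set of literals with $Vars(S)=V(H)\setminus\bigcup M$ that is $1$-comfortable w.r.t. $M$, and $\varphi\in{\bf CNF}(M)$. Then $\Pr({\bf ES}(\varphi)\mid{\bf EC}(S))=(2/3)^{|M|}$.
   Context: Sets of literals never contain a variable together with its negation; $Vars(S)$ is the set of variables occurring in $S$. A rooted tree is extended if none of its leaves has a sibling. A graph $H$ is a binary tree based graph if it is the edge-disjoint union of extended rooted trees $T_1,\dots,T_m$ with roots $t_1,\dots,t_m$ such that every leaf of some $T_i$ is a leaf of exactly two of the trees, and any two trees have at most one common vertex, which is a leaf of both. Vertices are root vertices, leaf vertices, and internal vertices (the rest); two internal vertices are siblings if they are siblings in the tree containing them. $T_i,T_j$ are adjacent if they share a leaf $\ell_{i,j}$; $P_{i,j}$ is the path between $t_i$ and $t_j$ in $T_i\cup T_j$; $P^{1/2}_{i\to j}$ is the path in $T_i$ from $t_i$ to $\ell_{i,j}$. A pseudoedge is a pair $\{t_i,t_j\}$ with $T_i,T_j$ adjacent; a pseudomatching is a set of pairwise disjoint pseudoedges; $\bigcup M$ is the set of their ends. $\phi_H$ is the CNF on variables $V(H)$ with a clause $C_{i,j}$ (positive literals of $V(P_{i,j})$) for each pseudoedge. ${\bf CNF}(M)$ is the set of CNFs consisting, for each $\{t_i,t_j\}\in M$, of one clause that is either the disjunction of positive literals of $V(P^{1/2}_{i\to j})$ or of $V(P^{1/2}_{j\to i})$. $S$ falsifies a clause if all its variables occur negatively in $S$. $S$ respects $\{t_i,t_j\}$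 if all non-root variables of $C_{i,j}$ occur negatively in $S$ and the siblings of all internal variables of $C_{i,j}$ occur positively in $S$. $S$ is $1$-comfortable w.r.t. $M$ if it falsifies no clause of $\phi_H$ and respects every pseudoedge of $M$. The positive literal $\ell_{i,j}$ is fixed w.r.t. $S'$ if $\ell_{i,j}\in S'$ and all other variables of $C_{i,j}$ occur negatively in $S'$; $Fix(S')$ is the set of fixed literals. ${\bf SAT}(H)$ is the set of satisfying assignments of $\phi_H$; each $S'\in{\bf SAT}(H)$ has probability $(1/2)^{|V(H)\setminus Fix(S')|}$. ${\bf EC}(S)=\{S'\in{\bf SAT}(H):S\subseteq S'\}$; ${\bf ES}(\varphi)=\{S'\in{\bf SAT}(H): S'\text{ satisfies }\varphi\}$. *)

theory Defs
  imports Complex_Main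
begin

text \<open>
A binary tree based graph H is given by a finite index set I of trees;
tree T_i has vertex set V i, root rt i and parent function par i (only meaningful on
non-root vertices of V i). The edges of T_i are {v, par i v} for v in V i - {rt i}.
Sets of literals (never containing a variable and its negation) are partial maps
'v \<rightharpoonup> bool: S v = Some True means the positive literal v is in S, Some False the
negative one; Vars(S) = dom S.
\<close>

definition rooted_tree :: "'v set \<Rightarrow> 'v \<Rightarrow> ('v \<Rightarrow> 'v) \<Rightarrow> bool" where
  "rooted_tree Vt r p \<longleftrightarrow> finite Vt \<and> r \<in> Vt \<and>
     (\<forall>v \<in> Vt - {r}. p v \<in> Vt) \<and> (\<forall>v \<in> Vt. \<exists>n. (p ^^ n) v = r)"

definition children :: "('i \<Rightarrow> 'v set) \<Rightarrow> ('i \<Rightarrow> 'v) \<Rightarrow> ('i \<Rightarrow> 'v \<Rightarrow> 'v) \<Rightarrow> 'i \<Rightarrow> 'v \<Rightarrow> 'v set" where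
  "children V rt par i u = {v \<in> V i - {rt i}. par i v = u}"

definition is_leaf :: "('i \<Rightarrow> 'v set) \<Rightarrow> ('i \<Rightarrow> 'v) \<Rightarrow> ('i \<Rightarrow> 'v \<Rightarrow> 'v) \<Rightarrow> 'i \<Rightarrow> 'v \<Rightarrow> bool" where
  "is_leaf V rt par i v \<longleftrightarrow> v \<in> V i \<and> v \<noteq> rt i \<and> children V rt par i v = {}"

definition extended :: "('i \<Rightarrow> 'v set) \<Rightarrow> ('i \<Rightarrow> 'v) \<Rightarrow> ('i \<Rightarrow> 'v \<Rightarrow> 'v) \<Rightarrow> 'i \<Rightarrow> bool" where
  "extended V rt par i \<longleftrightarrow>
     (\<forall>v. is_leaf V rt par i v \<longrightarrow> children V rt par i (par i v) = {v})"

definition btbg :: "'i set \<Rightarrow> ('i \<Rightarrow> 'v set) \<Rightarrow> ('i \<Rightarrow> 'v) \<Rightarrow> ('i \<Rightarrow> 'v \<Rightarrow> 'v) \<Rightarrow> bool" where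
  "btbg I V rt par \<longleftrightarrow> finite I \<and>
     (\<forall>i \<in> I. rooted_tree (V i) (rt i) (par i) \<and> extended V rt par i) \<and>
     (\<forall>i \<in> I. \<forall>v. is_leaf V rt par i v \<longrightarrow> card {j \<in> I. is_leaf V rt par j v} = 2) \<and>
     (\<forall>i \<in> I. \<forall>j \<in> I. i \<noteq> j \<longrightarrow>
        (\<forall>v \<in> V i \<inter> V j. \<forall>w \<in> V i \<inter> V j. v = w) \<and>
        (\<forall>v \<in> V i \<inter> V j. is_leaf V rt par i v \<and> is_leaf V rt par j v))"

definition VH :: "'i set \<Rightarrow> ('i \<Rightarrow> 'v set) \<Rightarrow> 'v set" where
  "VH I V = (\<Union>i \<in> I. V i)"

definition is_root_vertex :: "'i set \<Rightarrow> ('i \<Rightarrow> 'v) \<Rightarrow> 'v \<Rightarrow> bool" where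
  "is_root_vertex I rt v \<longleftrightarrow> v \<in> rt ` I"

definition is_leaf_vertex :: "'i set \<Rightarrow> ('i \<Rightarrow> 'v set) \<Rightarrow> ('i \<Rightarrow> 'v) \<Rightarrow> ('i \<Rightarrow> 'v \<Rightarrow> 'v) \<Rightarrow> 'v \<Rightarrow> bool" where
  "is_leaf_vertex I V rt par v \<longleftrightarrow> (\<exists>i \<in> I. is_leaf V rt par i v)"

definition is_internal :: "'i set \<Rightarrow> ('i \<Rightarrow> 'v set) \<Rightarrow> ('i \<Rightarrow> 'v) \<Rightarrow> ('i \<Rightarrow> 'v \<Rightarrow> 'v) \<Rightarrow> 'v \<Rightarrow> bool" where
  "is_internal I V rt par v \<longleftrightarrow> v \<in> VH I V \<and> \<not> is_root_vertex I rt v \<and> \<not> is_leaf_vertex I V rt par v"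

definition siblings :: "'i set \<Rightarrow> ('i \<Rightarrow> 'v set) \<Rightarrow> ('i \<Rightarrow> 'v) \<Rightarrow> ('i \<Rightarrow> 'v \<Rightarrow> 'v) \<Rightarrow> 'v \<Rightarrow> 'v \<Rightarrow> bool" where
  "siblings I V rt par v w \<longleftrightarrow> is_internal I V rt par v \<and> is_internal I V rt par w \<and> v \<noteq> w \<and>
     (\<exists>i \<in> I. v \<in> V i - {rt i} \<and> w \<in> V i - {rt i} \<and> par i v = par i w)"

definition adjacent :: "'i set \<Rightarrow> ('i \<Rightarrow> 'v set) \<Rightarrow> ('i \<Rightarrow> 'v) \<Rightarrow> ('i \<Rightarrow> 'v \<Rightarrow> 'v) \<Rightarrow> 'i \<Rightarrow> 'i \<Rightarrow> bool" where
  "adjacent I V rt par i j \<longleftrightarrow> i \<in> I \<and> j \<in> I \<and> i \<noteq> j \<and>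
     (\<exists>l. is_leaf V rt par i l \<and> is_leaf V rt par j l)"

definition common_leaf :: "('i \<Rightarrow> 'v set) \<Rightarrow> ('i \<Rightarrow> 'v) \<Rightarrow> ('i \<Rightarrow> 'v \<Rightarrow> 'v) \<Rightarrow> 'i \<Rightarrow> 'i \<Rightarrow> 'v" where
  "common_leaf V rt par i j = (THE l. is_leaf V rt par i l \<and> is_leaf V rt par j l)"

definition path_to_root :: "('i \<Rightarrow> 'v) \<Rightarrow> ('i \<Rightarrow> 'v \<Rightarrow> 'v) \<Rightarrow> 'i \<Rightarrow> 'v \<Rightarrow> 'v set" where
  "path_to_root rt par i v =
     {(par i ^^ k) v | k. k \<le> (LEAST n. (par i ^^ n) v = rt i)}"

definition half_path :: "('i \<Rightarrow> 'v set) \<Rightarrow> ('i \<Rightarrow> 'v) \<Rightarrow> ('i \<Rightarrow> 'v \<Rightarrow> 'v) \<Rightarrow> 'i \<Rightarrow> 'i \<Rightarrow> 'v set" where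
  "half_path V rt par i j = path_to_root rt par i (common_leaf V rt par i j)"

text \<open>V(P_{i,j}), i.e. the variables of the clause C_{i,j} (all positive).\<close>
definition full_path :: "('i \<Rightarrow> 'v set) \<Rightarrow> ('i \<Rightarrow> 'v) \<Rightarrow> ('i \<Rightarrow> 'v \<Rightarrow> 'v) \<Rightarrow> 'i \<Rightarrow> 'i \<Rightarrow> 'v set" where
  "full_path V rt par i j = half_path V rt par i j \<union> half_path V rt par j i"

definition pseudoedges :: "'i set \<Rightarrow> ('i \<Rightarrow> 'v set) \<Rightarrow> ('i \<Rightarrow> 'v) \<Rightarrow> ('i \<Rightarrow> 'v \<Rightarrow> 'v) \<Rightarrow> 'v set set" where
  "pseudoedges I V rt par = {{rt i, rt j} | i j. adjacent I V rt par i j}"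

definition pseudomatching :: "'i set \<Rightarrow> ('i \<Rightarrow> 'v set) \<Rightarrow> ('i \<Rightarrow> 'v) \<Rightarrow> ('i \<Rightarrow> 'v \<Rightarrow> 'v) \<Rightarrow> 'v set set \<Rightarrow> bool" where
  "pseudomatching I V rt par M \<longleftrightarrow> M \<subseteq> pseudoedges I V rt par \<and>
     (\<forall>e \<in> M. \<forall>e' \<in> M. e \<noteq> e' \<longrightarrow> e \<inter> e' = {})"

definition phiH :: "'i set \<Rightarrow> ('i \<Rightarrow> 'v set) \<Rightarrow> ('i \<Rightarrow> 'v) \<Rightarrow> ('i \<Rightarrow> 'v \<Rightarrow> 'v) \<Rightarrow> 'v set set" where
  "phiH I V rt par = {full_path V rt par i j | i j. adjacent I V rt par i j}"

definition CNFs :: "'i set \<Rightarrow> ('i \<Rightarrow> 'v set) \<Rightarrow> ('i \<Rightarrow> 'v) \<Rightarrow> ('i \<Rightarrow> 'v \<Rightarrow> 'v) \<Rightarrow> 'v set set \<Rightarrow> 'v set set set" where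
  "CNFs I V rt par M = {\<phi>. \<exists>f. \<phi> = f ` M \<and>
     (\<forall>e \<in> M. \<exists>i j. adjacent I V rt par i j \<and> e = {rt i, rt j} \<and>
        (f e = half_path V rt par i j \<or> f e = half_path V rt par j i))}"

definition falsifies :: "('v \<rightharpoonup> bool) \<Rightarrow> 'v set \<Rightarrow> bool" where
  "falsifies S C \<longleftrightarrow> (\<forall>v \<in> C. S v = Some False)"

definition satisfies_clause :: "('v \<rightharpoonup> bool) \<Rightarrow> 'v set \<Rightarrow> bool" where
  "satisfies_clause S C \<longleftrightarrow> (\<exists>v \<in> C. S v = Some True)"

definition satisfies_cnf :: "('v \<rightharpoonup> bool) \<Rightarrow> 'v set set \<Rightarrow> bool" where
  "satisfies_cnf S \<phi> \<longleftrightarrow> (\<forall>C \<in> \<phi>. satisfies_clause S C)"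

definition respects_pe :: "'i set \<Rightarrow> ('i \<Rightarrow> 'v set) \<Rightarrow> ('i \<Rightarrow> 'v) \<Rightarrow> ('i \<Rightarrow> 'v \<Rightarrow> 'v) \<Rightarrow> ('v \<rightharpoonup> bool) \<Rightarrow> 'i \<Rightarrow> 'i \<Rightarrow> bool" where
  "respects_pe I V rt par S i j \<longleftrightarrow>
     (\<forall>v \<in> full_path V rt par i j. \<not> is_root_vertex I rt v \<longrightarrow> S v = Some False) \<and>
     (\<forall>v \<in> full_path V rt par i j. is_internal I V rt par v \<longrightarrow>
        (\<forall>w. siblings I V rt par v w \<longrightarrow> S w = Some True))"

definition comfortable1 :: "'i set \<Rightarrow> ('i \<Rightarrow> 'v set) \<Rightarrow> ('i \<Rightarrow> 'v) \<Rightarrow> ('i \<Rightarrow> 'v \<Rightarrow> 'v) \<Rightarrow> ('v \<rightharpoonup> bool) \<Rightarrow> 'v set set \<Rightarrow> bool" where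
  "comfortable1 I V rt par S M \<longleftrightarrow>
     (\<forall>C \<in> phiH I V rt par. \<not> falsifies S C) \<and>
     (\<forall>e \<in> M. \<forall>i j. adjacent I V rt par i j \<and> e = {rt i, rt j} \<longrightarrow> respects_pe I V rt par S i j)"

definition SAT :: "'i set \<Rightarrow> ('i \<Rightarrow> 'v set) \<Rightarrow> ('i \<Rightarrow> 'v) \<Rightarrow> ('i \<Rightarrow> 'v \<Rightarrow> 'v) \<Rightarrow> ('v \<rightharpoonup> bool) set" where
  "SAT I V rt par = {S'. dom S' = VH I V \<and> satisfies_cnf S' (phiH I V rt par)}"

definition Fix :: "'i set \<Rightarrow> ('i \<Rightarrow> 'v set) \<Rightarrow> ('i \<Rightarrow> 'v) \<Rightarrow> ('i \<Rightarrow> 'v \<Rightarrow> 'v) \<Rightarrow> ('v \<rightharpoonup> bool) \<Rightarrow> 'v set" where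
  "Fix I V rt par S' = {l. \<exists>i j. adjacent I V rt par i j \<and> l = common_leaf V rt par i j \<and>
      S' l = Some True \<and> (\<forall>v \<in> full_path V rt par i j - {l}. S' v = Some False)}"

definition weight :: "'i set \<Rightarrow> ('i \<Rightarrow> 'v set) \<Rightarrow> ('i \<Rightarrow> 'v) \<Rightarrow> ('i \<Rightarrow> 'v \<Rightarrow> 'v) \<Rightarrow> ('v \<rightharpoonup> bool) \<Rightarrow> real" where
  "weight I V rt par S' = (1/2) ^ card (VH I V - Fix I V rt par S')"

definition EC :: "'i set \<Rightarrow> ('i \<Rightarrow> 'v set) \<Rightarrow> ('i \<Rightarrow> 'v) \<Rightarrow> ('i \<Rightarrow> 'v \<Rightarrow> 'v) \<Rightarrow> ('v \<rightharpoonup> bool) \<Rightarrow> ('v \<rightharpoonup> bool) set" where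
  "EC I V rt par S = {S' \<in> SAT I V rt par. S \<subseteq>\<^sub>m S'}"

definition ES :: "'i set \<Rightarrow> ('i \<Rightarrow> 'v set) \<Rightarrow> ('i \<Rightarrow> 'v) \<Rightarrow> ('i \<Rightarrow> 'v \<Rightarrow> 'v) \<Rightarrow> 'v set set \<Rightarrow> ('v \<rightharpoonup> bool) set" where
  "ES I V rt par \<phi> = {S' \<in> SAT I V rt par. satisfies_cnf S' \<phi>}"

definition Pr :: "'i set \<Rightarrow> ('i \<Rightarrow> 'v set) \<Rightarrow> ('i \<Rightarrow> 'v) \<Rightarrow> ('i \<Rightarrow> 'v \<Rightarrow> 'v) \<Rightarrow> ('v \<rightharpoonup> bool) set \<Rightarrow> real" where
  "Pr I V rt par A = (\<Sum>S' \<in> A. weight I V rt par S') / (\<Sum>S' \<in> SAT I V rt par. weight I V rt par S')"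

definition cond_Pr :: "'i set \<Rightarrow> ('i \<Rightarrow> 'v set) \<Rightarrow> ('i \<Rightarrow> 'v) \<Rightarrow> ('i \<Rightarrow> 'v \<Rightarrow> 'v) \<Rightarrow> ('v \<rightharpoonup> bool) set \<Rightarrow> ('v \<rightharpoonup> bool) set \<Rightarrow> real" where
  "cond_Pr I V rt par A B = Pr I V rt par (A \<inter> B) / Pr I V rt par B"

end

theory Submission
  imports Defs "HOL-Library.FuncSet"
begin

text \<open>
  Total extensions S' of S are determined by the set of matched roots they make true.
  Since S respects every pseudoedge {t_c, t_b} of M, each clause C_{c,d} that S does not fully
  assign is already decided with respect to fixing: either d = b and the leaf l_{c,d} is false
  in S, or the half path from t_c to l_{c,d} contains a vertex that is true in S, namely the
  sibling of a vertex of C_{c,b} at the point where the paths to l_{c,b} and l_{c,d} branch.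
  Hence Fix(S') = Fix(S), all extensions have the same weight, and the conditional probability
  is a ratio of counts. An extension satisfies phi_H iff every pair of M has a true root
  (3 choices per pair), and satisfies phi iff the root chosen by phi in every pair is true
  (2 choices per pair).
\<close>

lemma rooted_tree_reaches_root:
  assumes "rooted_tree Vt r p" "v \<in> Vt"
  shows "(p ^^ (LEAST n. (p ^^ n) v = r)) v = r"
  using assms unfolding rooted_tree_def by (meson LeastI_ex)

lemma rooted_tree_path_nonroot:
  assumes T: "rooted_tree Vt r p" and v: "v \<in> Vt" and k: "k < (LEAST n. (p ^^ n) v = r)"
  shows "(p ^^ k) v \<in> Vt - {r}"
  using k
proof (induction k)
  case 0
  then show ?case using v not_less_Least[OF "0.prems"] by simp
next
  case (Suc k)
  then have "(p ^^ k) v \<in> Vt - {r}" by simp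
  then have "(p ^^ Suc k) v \<in> Vt" using T unfolding rooted_tree_def by simp
  then show ?case using not_less_Least[OF Suc.prems] by simp
qed

lemma rooted_tree_path_mem:
  assumes T: "rooted_tree Vt r p" and v: "v \<in> Vt" and k: "k \<le> (LEAST n. (p ^^ n) v = r)"
  shows "(p ^^ k) v \<in> Vt"
proof (cases "k < (LEAST n. (p ^^ n) v = r)")
  case True
  then show ?thesis using rooted_tree_path_nonroot[OF T v] by blast
next
  case False
  then have "k = (LEAST n. (p ^^ n) v = r)" using k by simp
  then show ?thesis using rooted_tree_reaches_root[OF T v] T unfolding rooted_tree_def by simp
qed

lemma path_to_root_subset:
  assumes "rooted_tree Vt (rt i) (par i)" "v \<in> Vt"
  shows "path_to_root rt par i v \<subseteq> Vt"
  unfolding path_to_root_def using rooted_tree_path_mem[OF assms] by blast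

lemma root_in_path_to_root:
  assumes "rooted_tree Vt (rt i) (par i)" "v \<in> Vt"
  shows "rt i \<in> path_to_root rt par i v"
proof -
  have "(par i ^^ (LEAST n. (par i ^^ n) v = rt i)) v = rt i" by (rule rooted_tree_reaches_root[OF assms])
  then show ?thesis unfolding path_to_root_def by force
qed

lemma start_in_path_to_root: "v \<in> path_to_root rt par i v"
  unfolding path_to_root_def by (rule CollectI, rule exI[of _ 0]) simp

lemma leaf_on_path_to_root:
  assumes T: "rooted_tree (V i) (rt i) (par i)" and v: "v \<in> V i"
    and l: "is_leaf V rt par i l" and lp: "l \<in> path_to_root rt par i v"
  shows "l = v"
proof -
  obtain k where k: "k \<le> (LEAST n. (par i ^^ n) v = rt i)" and lk: "l = (par i ^^ k) v"
    using lp unfolding path_to_root_def by blast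
  show ?thesis
  proof (cases k)
    case (Suc k')
    then have "(par i ^^ k') v \<in> children V rt par i l"
      using rooted_tree_path_nonroot[OF T v, of k'] k lk unfolding children_def by simp
    then show ?thesis using l unfolding is_leaf_def by simp
  qed (use lk in simp)
qed

lemma paths_to_root_branch:
  assumes T: "rooted_tree Vt (rt i) (par i)" and u: "u \<in> Vt" and v: "v \<in> Vt"
    and vu: "v \<notin> path_to_root rt par i u" and uv: "u \<notin> path_to_root rt par i v"
  obtains x w where "x \<in> path_to_root rt par i u" "w \<in> path_to_root rt par i v"
    "x \<in> Vt - {rt i}" "w \<in> Vt - {rt i}" "x \<noteq> w" "par i x = par i w"
proof -
  let ?p = "par i"
  define nu where "nu = (LEAST n. (?p ^^ n) u = rt i)"
  define nv where "nv = (LEAST n. (?p ^^ n) v = rt i)"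
  have Pu: "path_to_root rt par i u = {(?p ^^ k) u | k. k \<le> nu}"
    unfolding path_to_root_def nu_def ..
  have Pv: "path_to_root rt par i v = {(?p ^^ k) v | k. k \<le> nv}"
    unfolding path_to_root_def nv_def ..
  define Q where "Q = {m. m \<le> nv \<and> (?p ^^ m) v \<notin> path_to_root rt par i u}"
  have "0 \<in> Q" using vu unfolding Q_def by simp
  moreover have finQ: "finite Q" unfolding Q_def by simp
  ultimately have mQ: "Max Q \<in> Q" using Max_in by blast
  define m where "m = Max Q"
  have "(?p ^^ nv) v \<in> path_to_root rt par i u"
    using rooted_tree_reaches_root[OF T v] root_in_path_to_root[where rt = rt and par = par, OF T u] nv_def
    by simp
  moreover have "m \<le> nv" "(?p ^^ m) v \<notin> path_to_root rt par i u"
    using mQ unfolding Q_def m_def by auto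
  ultimately have m_less: "m < nv" by (cases "m = nv") auto
  have "Suc m \<notin> Q" using Max_ge[OF finQ, of "Suc m"] m_def by linarith
  then obtain k where k: "k \<le> nu" and meet: "(?p ^^ Suc m) v = (?p ^^ k) u"
    using m_less unfolding Q_def Pu by auto
  define w where "w = (?p ^^ m) v"
  have "k \<noteq> 0"
  proof
    assume "k = 0"
    then have "u = (?p ^^ Suc m) v" using meet by simp
    moreover have "Suc m \<le> nv" using m_less by simp
    ultimately have "u \<in> path_to_root rt par i v" unfolding Pv by blast
    then show False using uv by contradiction
  qed
  then obtain k' where k': "k = Suc k'" using not0_implies_Suc by blast
  define x where "x = (?p ^^ k') u"
  have x_path: "x \<in> path_to_root rt par i u" using k k' unfolding Pu x_def by auto
  have w_not_path: "w \<notin> path_to_root rt par i u" using mQ unfolding Q_def m_def w_def by simp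
  show ?thesis
  proof (rule that)
    show "x \<in> path_to_root rt par i u" by (fact x_path)
    show "w \<in> path_to_root rt par i v" using m_less unfolding Pv w_def by auto
    show "x \<in> Vt - {rt i}" using rooted_tree_path_nonroot[OF T u] k k' nu_def x_def by simp
    show "w \<in> Vt - {rt i}" using rooted_tree_path_nonroot[OF T v] m_less nv_def w_def by simp
    show "x \<noteq> w" using x_path w_not_path by blast
    show "par i x = par i w" using meet k' unfolding x_def w_def by simp
  qed
qed

lemma extended_sibling_not_leaf:
  assumes "extended V rt par i" "w \<in> V i - {rt i}" "x \<noteq> w" "par i x = par i w"
  shows "\<not> is_leaf V rt par i x"
proof
  assume "is_leaf V rt par i x"
  then have "children V rt par i (par i x) = {x}" using assms(1) unfolding extended_def by blast
  moreover have "w \<in> children V rt par i (par i x)" using assms(2,4) unfolding children_def by simp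
  ultimately show False using assms(3) by auto
qed

lemma map_le_SomeD: "S \<subseteq>\<^sub>m S' \<Longrightarrow> S v = Some b \<Longrightarrow> S' v = Some b"
  by (force simp: map_le_def)

lemma card_subsets_blockwise:
  assumes fin: "finite M" and disj: "\<forall>e\<in>M. \<forall>e'\<in>M. e \<noteq> e' \<longrightarrow> e \<inter> e' = {}"
  shows "card {T. T \<subseteq> \<Union>M \<and> (\<forall>e\<in>M. Q e (T \<inter> e))} = (\<Prod>e\<in>M. card {U. U \<subseteq> e \<and> Q e U})"
proof -
  have block: "\<Union>(h ` M) \<inter> e = h e" if "h \<in> (\<Pi>\<^sub>E e\<in>M. {U. U \<subseteq> e \<and> Q e U})" "e \<in> M" for h e
  proof
    show "h e \<subseteq> \<Union>(h ` M) \<inter> e" using that by auto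
    show "\<Union>(h ` M) \<inter> e \<subseteq> h e"
    proof
      fix x assume "x \<in> \<Union>(h ` M) \<inter> e"
      then obtain e' where "e' \<in> M" "x \<in> h e'" "x \<in> e" by blast
      moreover then have "e' = e" using that disj by blast
      ultimately show "x \<in> h e" by simp
    qed
  qed
  have blocks_union: "(\<lambda>e\<in>M. \<Union>(h ` M) \<inter> e) = h" if "h \<in> (\<Pi>\<^sub>E e\<in>M. {U. U \<subseteq> e \<and> Q e U})" for h
  proof (rule ext)
    fix e
    show "(\<lambda>e\<in>M. \<Union>(h ` M) \<inter> e) e = h e"
      using that block by (cases "e \<in> M") (auto simp: PiE_def extensional_def)
  qed
  have "bij_betw (\<lambda>T. \<lambda>e\<in>M. T \<inter> e) {T. T \<subseteq> \<Union>M \<and> (\<forall>e\<in>M. Q e (T \<inter> e))}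
          (\<Pi>\<^sub>E e\<in>M. {U. U \<subseteq> e \<and> Q e U})"
  proof (rule bij_betw_byWitness[where f' = "\<lambda>h. \<Union>(h ` M)"])
    show "\<forall>T\<in>{T. T \<subseteq> \<Union>M \<and> (\<forall>e\<in>M. Q e (T \<inter> e))}. \<Union>((\<lambda>e\<in>M. T \<inter> e) ` M) = T"
      by auto
    show "(\<lambda>h. \<Union>(h ` M)) ` (\<Pi>\<^sub>E e\<in>M. {U. U \<subseteq> e \<and> Q e U})
        \<subseteq> {T. T \<subseteq> \<Union>M \<and> (\<forall>e\<in>M. Q e (T \<inter> e))}"
      using block by (fastforce simp: PiE_def)
  qed (use blocks_union in auto)
  then show ?thesis unfolding card_PiE[OF fin, symmetric] by (rule bij_betw_same_card)
qed

lemma card_nonempty_subsets_of_pair: "card e = 2 \<Longrightarrow> card {U. U \<subseteq> e \<and> U \<noteq> {}} = 3"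
proof -
  assume e: "card e = 2"
  then have "finite e" using card.infinite by fastforce
  moreover have "{U. U \<subseteq> e \<and> U \<noteq> {}} = Pow e - {{}}" by blast
  ultimately show ?thesis using e by (simp add: card_Pow card_Diff_singleton)
qed

lemma card_subsets_of_pair_containing:
  assumes "card e = 2" and "a \<in> e"
  shows "card {U. U \<subseteq> e \<and> a \<in> U} = 2"
proof -
  obtain b where "a \<noteq> b" "e = {a, b}"
  proof -
    obtain x y where "x \<noteq> y" "e = {x, y}" using assms(1) card_2_iff by metis
    then show ?thesis using that assms(2) by (metis doubleton_eq_iff insertE singletonD)
  qed
  moreover have "{U. U \<subseteq> {a, b} \<and> a \<in> U} = {{a}, {a, b}}" by blast
  ultimately show ?thesis by (simp add: doubleton_eq_iff)
qed

lemma card_extensions_by_true_set: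
  assumes domS: "dom S = D - X" and XD: "X \<subseteq> D"
  shows "card {S'. dom S' = D \<and> S \<subseteq>\<^sub>m S' \<and> P {v \<in> X. S' v = Some True}} = card {T. T \<subseteq> X \<and> P T}"
proof -
  let ?extend = "\<lambda>T v. if v \<in> X then Some (v \<in> T) else S v"
  have extend_true_set: "{v \<in> X. ?extend T v = Some True} = T" if "T \<subseteq> X" for T
    using that by auto
  have true_set_extend: "?extend {v \<in> X. S' v = Some True} = S'"
    if "dom S' = D" "S \<subseteq>\<^sub>m S'" for S'
  proof
    fix v
    show "?extend {v \<in> X. S' v = Some True} v = S' v"
    proof (cases "v \<in> X")
      case True
      then show ?thesis using that XD by (cases "S' v") auto
    next
      case False
      show ?thesis
      proof (cases "v \<in> D")
        case True
        then have "v \<in> dom S" using False domS by blast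
        then show ?thesis using False that(2) by (simp add: map_le_def)
      next
        case outside: False
        then have "v \<notin> dom S" "v \<notin> dom S'" using domS that(1) by auto
        then show ?thesis using False by (simp add: domIff)
      qed
    qed
  qed
  have extend_dom: "dom (?extend T) = D" for T
    using domS XD by (auto simp: dom_def)
  have extend_extends: "S \<subseteq>\<^sub>m ?extend T" for T
    using domS by (auto simp: map_le_def)
  have "bij_betw (\<lambda>S'. {v \<in> X. S' v = Some True})
          {S'. dom S' = D \<and> S \<subseteq>\<^sub>m S' \<and> P {v \<in> X. S' v = Some True}} {T. T \<subseteq> X \<and> P T}"
  proof (rule bij_betw_byWitness[where f' = ?extend])
    show "?extend ` {T. T \<subseteq> X \<and> P T} \<subseteq> {S'. dom S' = D \<and> S \<subseteq>\<^sub>m S' \<and> P {v \<in> X. S' v = Some True}}"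
      using extend_dom extend_extends extend_true_set by auto
  qed (use true_set_extend extend_true_set in auto)
  then show ?thesis by (rule bij_betw_same_card)
qed

lemma cond_Pr_constant_weight:
  assumes fin: "finite (SAT I V rt par)" and B: "B \<subseteq> SAT I V rt par" "B \<noteq> {}"
    and const: "\<And>S'. S' \<in> B \<Longrightarrow> weight I V rt par S' = c"
  shows "cond_Pr I V rt par A B = card (A \<inter> B) / card B"
proof -
  have finB: "finite B" using fin B(1) by (rule finite_subset[rotated])
  have c_pos: "c > 0" using B(2) const unfolding weight_def by force
  have sum_A: "(\<Sum>S'\<in>A \<inter> B. weight I V rt par S') = card (A \<inter> B) * c"
    using const by simp
  have sum_B: "(\<Sum>S'\<in>B. weight I V rt par S') = card B * c"
    using const by simp
  have "card B * c \<le> (\<Sum>S'\<in>SAT I V rt par. weight I V rt par S')"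
    unfolding sum_B[symmetric] by (rule sum_mono2[OF fin B(1)]) (simp add: weight_def)
  moreover have "card B * c > 0" using finB B(2) c_pos by (simp add: card_gt_0_iff)
  ultimately have "(\<Sum>S'\<in>SAT I V rt par. weight I V rt par S') > 0" by linarith
  then show ?thesis
    unfolding cond_Pr_def Pr_def sum_A sum_B using c_pos by (simp add: field_simps)
qed

lemma finite_SAT: "finite (VH I V) \<Longrightarrow> finite (SAT I V rt par)"
proof -
  assume "finite (VH I V)"
  then have "finite {m. dom m = VH I V \<and> ran m \<subseteq> (UNIV :: bool set)}"
    by (rule finite_set_of_finite_maps) simp
  then show ?thesis by (rule finite_subset[rotated]) (auto simp: SAT_def)
qed

locale binary_tree_based_graph =
  fixes I :: "'i set" and V :: "'i \<Rightarrow> 'v set" and rt :: "'i \<Rightarrow> 'v" and par :: "'i \<Rightarrow> 'v \<Rightarrow> 'v"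
  assumes btbg: "btbg I V rt par"
begin

lemma finite_trees: "finite I"
  using btbg unfolding btbg_def by simp

lemma tree_rooted: "i \<in> I \<Longrightarrow> rooted_tree (V i) (rt i) (par i)"
  using btbg unfolding btbg_def by simp

lemma tree_extended: "i \<in> I \<Longrightarrow> extended V rt par i"
  using btbg unfolding btbg_def by simp

lemma finite_VH: "finite (VH I V)"
  using finite_trees tree_rooted unfolding VH_def rooted_tree_def by simp

lemma shared_vertex_is_leaf:
  "i \<in> I \<Longrightarrow> j \<in> I \<Longrightarrow> i \<noteq> j \<Longrightarrow> v \<in> V i \<Longrightarrow> v \<in> V j \<Longrightarrow>
   is_leaf V rt par i v \<and> is_leaf V rt par j v"
  using btbg unfolding btbg_def by blast

lemma shared_vertex_unique:
  "i \<in> I \<Longrightarrow> j \<in> I \<Longrightarrow> i \<noteq> j \<Longrightarrow> v \<in> V i \<inter> V j \<Longrightarrow> w \<in> V i \<inter> V j \<Longrightarrow> v = w"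
  using btbg unfolding btbg_def by blast

lemma card_trees_with_leaf:
  "i \<in> I \<Longrightarrow> is_leaf V rt par i v \<Longrightarrow> card {j \<in> I. is_leaf V rt par j v} = 2"
  using btbg unfolding btbg_def by blast

lemma root_in_tree: "i \<in> I \<Longrightarrow> rt i \<in> V i"
  using tree_rooted unfolding rooted_tree_def by simp

lemma root_in_tree_imp_eq: "i \<in> I \<Longrightarrow> j \<in> I \<Longrightarrow> rt i \<in> V j \<Longrightarrow> i = j"
  using shared_vertex_is_leaf[of i j "rt i"] root_in_tree unfolding is_leaf_def by blast

lemma adjacent_sym: "adjacent I V rt par i j \<Longrightarrow> adjacent I V rt par j i"
  unfolding adjacent_def by blast

lemma adjacentD: "adjacent I V rt par i j \<Longrightarrow> i \<in> I \<and> j \<in> I \<and> i \<noteq> j"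
  unfolding adjacent_def by blast

lemma common_leaf_is_leaf:
  assumes a: "adjacent I V rt par i j"
  shows "is_leaf V rt par i (common_leaf V rt par i j) \<and> is_leaf V rt par j (common_leaf V rt par i j)"
proof -
  obtain l where l: "is_leaf V rt par i l" "is_leaf V rt par j l"
    using a unfolding adjacent_def by blast
  have unique: "l' = l" if "is_leaf V rt par i l' \<and> is_leaf V rt par j l'" for l'
    using shared_vertex_unique[of i j l' l] that l adjacentD[OF a] unfolding is_leaf_def by blast
  show ?thesis
    unfolding common_leaf_def
    by (rule theI[of "\<lambda>l. is_leaf V rt par i l \<and> is_leaf V rt par j l" l]) (use l unique in blast)+
qed

lemma common_leaf_commute: "common_leaf V rt par i j = common_leaf V rt par j i"
  unfolding common_leaf_def by (simp add: conj_commute)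

lemma full_path_commute: "full_path V rt par i j = full_path V rt par j i"
  unfolding full_path_def by blast

lemma common_leaf_in_tree: "adjacent I V rt par i j \<Longrightarrow> common_leaf V rt par i j \<in> V i"
  using common_leaf_is_leaf unfolding is_leaf_def by blast

lemma half_path_subset_tree:
  assumes "adjacent I V rt par i j"
  shows "half_path V rt par i j \<subseteq> V i"
  unfolding half_path_def
  using path_to_root_subset[where rt = rt and par = par and i = i, OF tree_rooted]
    adjacentD[OF assms] common_leaf_in_tree[OF assms]
  by blast

lemma root_in_half_path: "adjacent I V rt par i j \<Longrightarrow> rt i \<in> half_path V rt par i j"
  unfolding half_path_def using adjacentD common_leaf_in_tree
  by (blast intro: root_in_path_to_root[where rt = rt and par = par and i = i, OF tree_rooted])

lemma common_leaf_in_full_path: "common_leaf V rt par i j \<in> full_path V rt par i j"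
  unfolding full_path_def half_path_def by (simp add: start_in_path_to_root)

lemma full_path_subset_VH:
  assumes a: "adjacent I V rt par i j"
  shows "full_path V rt par i j \<subseteq> VH I V"
  unfolding full_path_def VH_def
  using half_path_subset_tree[OF a] half_path_subset_tree[OF adjacent_sym[OF a]] adjacentD[OF a] by blast

lemma root_in_full_path:
  "adjacent I V rt par c d \<Longrightarrow> m \<in> I \<Longrightarrow> rt m \<in> full_path V rt par c d \<Longrightarrow> m = c \<or> m = d"
  unfolding full_path_def
  using half_path_subset_tree adjacent_sym adjacentD root_in_tree_imp_eq by blast

lemma leaf_not_root_vertex: "i \<in> I \<Longrightarrow> is_leaf V rt par i v \<Longrightarrow> \<not> is_root_vertex I rt v"
  unfolding is_root_vertex_def is_leaf_def using root_in_tree_imp_eq by blast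

lemma internal_vertexI:
  assumes i: "i \<in> I" and v: "v \<in> V i - {rt i}" and not_leaf: "\<not> is_leaf V rt par i v"
  shows "is_internal I V rt par v"
proof -
  have "\<not> is_root_vertex I rt v"
    using i v root_in_tree_imp_eq unfolding is_root_vertex_def by blast
  moreover have "\<not> is_leaf V rt par j v" if "j \<in> I" for j
    using shared_vertex_is_leaf[OF i that] not_leaf v unfolding is_leaf_def by (cases "j = i") auto
  ultimately show ?thesis
    using i v unfolding is_internal_def is_leaf_vertex_def VH_def by blast
qed

lemma common_leaves_distinct:
  assumes cb: "adjacent I V rt par c b" and cd: "adjacent I V rt par c d" and "b \<noteq> d"
  shows "common_leaf V rt par c b \<noteq> common_leaf V rt par c d"
proof
  let ?l = "common_leaf V rt par c b"
  assume same: "?l = common_leaf V rt par c d"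
  have c: "c \<in> I" and leaf: "is_leaf V rt par c ?l" using common_leaf_is_leaf[OF cb] adjacentD[OF cb] by auto
  have "{c, b, d} \<subseteq> {j \<in> I. is_leaf V rt par j ?l}"
    using common_leaf_is_leaf[OF cb] common_leaf_is_leaf[OF cd] adjacentD[OF cb] adjacentD[OF cd] same
    by auto
  then have "card {c, b, d} \<le> card {j \<in> I. is_leaf V rt par j ?l}"
    by (rule card_mono[rotated]) (simp add: finite_trees)
  also have "\<dots> = 2" by (rule card_trees_with_leaf[OF c leaf])
  finally show False using adjacentD[OF cb] adjacentD[OF cd] \<open>b \<noteq> d\<close> by simp
qed

text \<open>Extendedness is what makes the two branching vertices internal, hence siblings in H.\<close>
lemma siblings_on_half_paths:
  assumes cb: "adjacent I V rt par c b" and cd: "adjacent I V rt par c d" and "b \<noteq> d"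
  obtains x w where "x \<in> half_path V rt par c b" "w \<in> half_path V rt par c d"
    "siblings I V rt par x w" "w \<noteq> common_leaf V rt par c d"
proof -
  let ?l1 = "common_leaf V rt par c b" and ?l2 = "common_leaf V rt par c d"
  have c: "c \<in> I" using adjacentD[OF cb] by simp
  note T = tree_rooted[OF c]
  have l1: "is_leaf V rt par c ?l1" and l2: "is_leaf V rt par c ?l2"
    using common_leaf_is_leaf[OF cb] common_leaf_is_leaf[OF cd] by auto
  have l1V: "?l1 \<in> V c" and l2V: "?l2 \<in> V c" using l1 l2 unfolding is_leaf_def by auto
  have distinct: "?l1 \<noteq> ?l2" by (rule common_leaves_distinct[OF cb cd \<open>b \<noteq> d\<close>])
  obtain x w where x: "x \<in> path_to_root rt par c ?l1" and w: "w \<in> path_to_root rt par c ?l2"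
    and xV: "x \<in> V c - {rt c}" and wV: "w \<in> V c - {rt c}" and xw: "x \<noteq> w" and pxw: "par c x = par c w"
    using paths_to_root_branch[where rt = rt and par = par and i = c, OF T l1V l2V]
      leaf_on_path_to_root[where V = V and rt = rt and par = par and i = c, OF T] l1 l2 l1V l2V distinct
    by metis
  have x_not_leaf: "\<not> is_leaf V rt par c x"
    using extended_sibling_not_leaf[OF tree_extended[OF c] wV xw pxw] .
  have w_not_leaf: "\<not> is_leaf V rt par c w"
    using extended_sibling_not_leaf[OF tree_extended[OF c] xV xw[symmetric] pxw[symmetric]] .
  show ?thesis
  proof (rule that)
    show "x \<in> half_path V rt par c b" "w \<in> half_path V rt par c d"
      using x w unfolding half_path_def by auto
    show "siblings I V rt par x w"
      unfolding siblings_def using internal_vertexI[OF c] x_not_leaf w_not_leaf xV wV xw pxw c by blast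
    show "w \<noteq> ?l2" using w_not_leaf l2 by blast
  qed
qed

end

locale comfortable_assignment = binary_tree_based_graph I V rt par
  for I :: "'i set" and V :: "'i \<Rightarrow> 'v set" and rt :: "'i \<Rightarrow> 'v" and par :: "'i \<Rightarrow> 'v \<Rightarrow> 'v" +
  fixes M :: "'v set set" and S :: "'v \<rightharpoonup> bool"
  assumes pseudomatching: "pseudomatching I V rt par M"
    and dom_S: "dom S = VH I V - \<Union>M"
    and comfortable: "comfortable1 I V rt par S M"
begin

lemma matched_pseudoedge: "e \<in> M \<Longrightarrow> \<exists>i j. adjacent I V rt par i j \<and> e = {rt i, rt j}"
  using pseudomatching unfolding pseudomatching_def pseudoedges_def by blast

lemma finite_M: "finite M"
proof -
  have "M \<subseteq> (\<lambda>(i, j). {rt i, rt j}) ` (I \<times> I)"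
    using matched_pseudoedge adjacentD by fastforce
  then show ?thesis using finite_subset finite_trees by blast
qed

lemma disjoint_M: "\<forall>e\<in>M. \<forall>e'\<in>M. e \<noteq> e' \<longrightarrow> e \<inter> e' = {}"
  using pseudomatching unfolding pseudomatching_def by blast

lemma card_matched: "e \<in> M \<Longrightarrow> card e = 2"
  using matched_pseudoedge adjacentD root_in_tree root_in_tree_imp_eq by (metis card_2_iff)

lemma matched_vertex_is_root: "v \<in> \<Union>M \<Longrightarrow> \<exists>m\<in>I. v = rt m"
  using matched_pseudoedge adjacentD by blast

lemma matched_subset_VH: "\<Union>M \<subseteq> VH I V"
  using matched_vertex_is_root root_in_tree unfolding VH_def by blast

lemma matched_partner:
  assumes e: "e \<in> M" and c: "c \<in> I" and "rt c \<in> e"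
  obtains b where "adjacent I V rt par c b" "e = {rt c, rt b}"
proof -
  obtain i j where a: "adjacent I V rt par i j" and e_ij: "e = {rt i, rt j}"
    using matched_pseudoedge[OF e] by blast
  have "c = i \<or> c = j"
    using \<open>rt c \<in> e\<close> e_ij c adjacentD[OF a] root_in_tree root_in_tree_imp_eq by fastforce
  then show ?thesis using that a adjacent_sym[OF a] e_ij by (metis insert_commute)
qed

lemma respects_matched:
  "e \<in> M \<Longrightarrow> adjacent I V rt par i j \<Longrightarrow> e = {rt i, rt j} \<Longrightarrow> respects_pe I V rt par S i j"
  using comfortable unfolding comfortable1_def by blast

lemma respected_nonroot_false:
  "e \<in> M \<Longrightarrow> adjacent I V rt par i j \<Longrightarrow> e = {rt i, rt j} \<Longrightarrow>
   v \<in> full_path V rt par i j \<Longrightarrow> \<not> is_root_vertex I rt v \<Longrightarrow> S v = Some False"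
  using respects_matched unfolding respects_pe_def by blast

lemma respected_half_path_true:
  assumes e: "e \<in> M" and cb: "adjacent I V rt par c b" and e_cb: "e = {rt c, rt b}"
    and cd: "adjacent I V rt par c d" and "d \<noteq> b"
  obtains w where "w \<in> half_path V rt par c d" "w \<noteq> common_leaf V rt par c d" "S w = Some True"
proof -
  obtain x w where x: "x \<in> half_path V rt par c b" and w: "w \<in> half_path V rt par c d"
    and sib: "siblings I V rt par x w" and w_leaf: "w \<noteq> common_leaf V rt par c d"
    using siblings_on_half_paths[OF cb cd] \<open>d \<noteq> b\<close> by metis
  have "x \<in> full_path V rt par c b" using x unfolding full_path_def by blast
  moreover have "is_internal I V rt par x" using sib unfolding siblings_def by blast
  ultimately have "S w = Some True"
    using respects_matched[OF e cb e_cb] sib unfolding respects_pe_def by blast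
  then show ?thesis using that w w_leaf by blast
qed

lemma unassigned_clause_meets_M:
  assumes a: "adjacent I V rt par c d" and "\<not> full_path V rt par c d \<subseteq> dom S"
  shows "\<exists>e\<in>M. rt c \<in> e \<or> rt d \<in> e"
proof -
  obtain v where v: "v \<in> full_path V rt par c d" "v \<notin> dom S" using assms(2) by blast
  then obtain e where e: "e \<in> M" "v \<in> e" using full_path_subset_VH[OF a] dom_S by blast
  then obtain m where "m \<in> I" "v = rt m" using matched_vertex_is_root by blast
  then show ?thesis using root_in_full_path[OF a] v e by blast
qed

text \<open>The two alternatives correspond to d being the partner of c in M or not.\<close>
lemma matched_clause_decided:
  assumes a: "adjacent I V rt par c d" and e: "e \<in> M" and "rt c \<in> e"
  shows "(\<exists>v \<in> full_path V rt par c d - {common_leaf V rt par c d}. S v = Some True)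
         \<or> S (common_leaf V rt par c d) = Some False"
proof -
  have c: "c \<in> I" using adjacentD[OF a] by simp
  obtain b where cb: "adjacent I V rt par c b" and e_cb: "e = {rt c, rt b}"
    using matched_partner[OF e c \<open>rt c \<in> e\<close>] .
  show ?thesis
  proof (cases "d = b")
    case True
    have "\<not> is_root_vertex I rt (common_leaf V rt par c d)"
      using leaf_not_root_vertex[OF c] common_leaf_is_leaf[OF a] by blast
    then show ?thesis
      using respected_nonroot_false[OF e cb e_cb] common_leaf_in_full_path True by blast
  next
    case False
    then obtain w where "w \<in> half_path V rt par c d" "w \<noteq> common_leaf V rt par c d" "S w = Some True"
      using respected_half_path_true[OF e cb e_cb a] by metis
    then show ?thesis unfolding full_path_def by blast
  qed
qed

lemma clause_decided:
  assumes a: "adjacent I V rt par c d"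
  shows "full_path V rt par c d \<subseteq> dom S \<or>
         (\<exists>v \<in> full_path V rt par c d - {common_leaf V rt par c d}. S v = Some True)
         \<or> S (common_leaf V rt par c d) = Some False"
  using unassigned_clause_meets_M[OF a] matched_clause_decided[OF a]
    matched_clause_decided[OF adjacent_sym[OF a]] full_path_commute common_leaf_commute
  by metis

lemma Fix_extension:
  assumes le: "S \<subseteq>\<^sub>m S'"
  shows "Fix I V rt par S' = Fix I V rt par S"
proof -
  have fixed_iff:
    "(S' (common_leaf V rt par c d) = Some True \<and>
        (\<forall>v \<in> full_path V rt par c d - {common_leaf V rt par c d}. S' v = Some False))
     \<longleftrightarrow> (S (common_leaf V rt par c d) = Some True \<and>
        (\<forall>v \<in> full_path V rt par c d - {common_leaf V rt par c d}. S v = Some False))"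
    if a: "adjacent I V rt par c d" for c d
    using clause_decided[OF a]
  proof (elim disjE)
    assume "full_path V rt par c d \<subseteq> dom S"
    then have "\<forall>v \<in> full_path V rt par c d. S v = S' v" using le unfolding map_le_def by blast
    then show ?thesis using common_leaf_in_full_path by auto
  next
    assume "\<exists>v \<in> full_path V rt par c d - {common_leaf V rt par c d}. S v = Some True"
    then obtain v where "v \<in> full_path V rt par c d - {common_leaf V rt par c d}" "S v = Some True"
      by blast
    then show ?thesis using map_le_SomeD[OF le, of v] by fastforce
  next
    assume false: "S (common_leaf V rt par c d) = Some False"
    then show ?thesis using map_le_SomeD[OF le false] by simp
  qed
  show ?thesis unfolding Fix_def using fixed_iff by blast
qed

lemma weight_extension: "S \<subseteq>\<^sub>m S' \<Longrightarrow> weight I V rt par S' = weight I V rt par S"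
  unfolding weight_def using Fix_extension by metis

lemma matched_clause_satisfied:
  assumes a: "adjacent I V rt par c d" and e: "e \<in> M" and "rt c \<in> e" and le: "S \<subseteq>\<^sub>m S'"
    and roots: "\<forall>e\<in>M. \<exists>v\<in>e. S' v = Some True"
  shows "satisfies_clause S' (full_path V rt par c d)"
proof -
  have c: "c \<in> I" using adjacentD[OF a] by simp
  obtain b where cb: "adjacent I V rt par c b" and e_cb: "e = {rt c, rt b}"
    using matched_partner[OF e c \<open>rt c \<in> e\<close>] .
  show ?thesis
  proof (cases "d = b")
    case True
    then have "e \<subseteq> full_path V rt par c d"
      using e_cb root_in_half_path[OF a] root_in_half_path[OF adjacent_sym[OF a]]
      unfolding full_path_def by blast
    then show ?thesis using roots e unfolding satisfies_clause_def by blast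
  next
    case False
    then obtain w where "w \<in> half_path V rt par c d" "S w = Some True"
      using respected_half_path_true[OF e cb e_cb a] by metis
    then show ?thesis using map_le_SomeD[OF le] unfolding satisfies_clause_def full_path_def by blast
  qed
qed

lemma respected_clause_true_at_root:
  assumes e: "e \<in> M" and a: "adjacent I V rt par i j" and e_ij: "e = {rt i, rt j}"
    and le: "S \<subseteq>\<^sub>m S'" and v: "v \<in> full_path V rt par i j" "S' v = Some True"
  shows "v = rt i \<or> v = rt j"
proof -
  have "is_root_vertex I rt v"
  proof (rule ccontr)
    assume "\<not> is_root_vertex I rt v"
    then have "S' v = Some False"
      using map_le_SomeD[OF le respected_nonroot_false[OF e a e_ij v(1)]] by simp
    then show False using v(2) by simp
  qed
  then obtain m where "m \<in> I" "v = rt m" unfolding is_root_vertex_def by blast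
  then show ?thesis using root_in_full_path[OF a] v(1) by blast
qed

lemma extension_satisfies_phiH_iff:
  assumes le: "S \<subseteq>\<^sub>m S'"
  shows "satisfies_cnf S' (phiH I V rt par) \<longleftrightarrow> (\<forall>e\<in>M. \<exists>v\<in>e. S' v = Some True)"
proof
  assume sat: "satisfies_cnf S' (phiH I V rt par)"
  show "\<forall>e\<in>M. \<exists>v\<in>e. S' v = Some True"
  proof
    fix e assume e: "e \<in> M"
    then obtain i j where a: "adjacent I V rt par i j" and e_ij: "e = {rt i, rt j}"
      using matched_pseudoedge by blast
    have "full_path V rt par i j \<in> phiH I V rt par" unfolding phiH_def using a by blast
    then obtain v where "v \<in> full_path V rt par i j" "S' v = Some True"
      using sat unfolding satisfies_cnf_def satisfies_clause_def by blast
    then show "\<exists>v\<in>e. S' v = Some True"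
      using respected_clause_true_at_root[OF e a e_ij le] e_ij by blast
  qed
next
  assume roots: "\<forall>e\<in>M. \<exists>v\<in>e. S' v = Some True"
  show "satisfies_cnf S' (phiH I V rt par)" unfolding satisfies_cnf_def
  proof
    fix C assume C: "C \<in> phiH I V rt par"
    then obtain c d where a: "adjacent I V rt par c d" and C_cd: "C = full_path V rt par c d"
      unfolding phiH_def by blast
    show "satisfies_clause S' C"
    proof (cases "C \<subseteq> dom S")
      case True
      obtain v where "v \<in> C" "S v \<noteq> Some False"
        using comfortable C unfolding comfortable1_def falsifies_def by blast
      then have "v \<in> C" "S v = Some True" using True by auto
      then show ?thesis using map_le_SomeD[OF le] unfolding satisfies_clause_def by blast
    next
      case False
      then obtain e where "e \<in> M" "rt c \<in> e \<or> rt d \<in> e"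
        using unassigned_clause_meets_M[OF a] C_cd by blast
      then show ?thesis
        using matched_clause_satisfied[OF a _ _ le roots]
          matched_clause_satisfied[OF adjacent_sym[OF a] _ _ le roots] C_cd full_path_commute
        by metis
    qed
  qed
qed

lemma extension_satisfies_half_path_iff:
  assumes e: "e \<in> M" and a: "adjacent I V rt par i j" and e_ij: "e = {rt i, rt j}"
    and le: "S \<subseteq>\<^sub>m S'"
  shows "satisfies_clause S' (half_path V rt par i j) \<longleftrightarrow> S' (rt i) = Some True"
proof
  assume "satisfies_clause S' (half_path V rt par i j)"
  then obtain v where v: "v \<in> half_path V rt par i j" "S' v = Some True"
    unfolding satisfies_clause_def by blast
  then have "v = rt i \<or> v = rt j"
    using respected_clause_true_at_root[OF e a e_ij le] unfolding full_path_def by blast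
  moreover have "rt j \<notin> half_path V rt par i j"
    using half_path_subset_tree[OF a] adjacentD[OF a] root_in_tree_imp_eq by blast
  ultimately show "S' (rt i) = Some True" using v by blast
next
  assume "S' (rt i) = Some True"
  then show "satisfies_clause S' (half_path V rt par i j)"
    using root_in_half_path[OF a] unfolding satisfies_clause_def by blast
qed

text \<open>Each clause of a CNF in CNFs(M) is a half path and, over extensions of S, is equivalent
  to the root at which it starts.\<close>
lemma CNFs_chosen_roots:
  assumes "\<phi> \<in> CNFs I V rt par M"
  obtains r where "\<forall>e\<in>M. r e \<in> e"
    and "\<And>S'. S \<subseteq>\<^sub>m S' \<Longrightarrow> satisfies_cnf S' \<phi> \<longleftrightarrow> (\<forall>e\<in>M. S' (r e) = Some True)"
proof -
  obtain f where \<phi>: "\<phi> = f ` M" and f: "\<forall>e \<in> M. \<exists>i j. adjacent I V rt par i j \<and> e = {rt i, rt j} \<and>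
        (f e = half_path V rt par i j \<or> f e = half_path V rt par j i)"
    using assms unfolding CNFs_def by blast
  have "\<exists>x\<in>e. \<forall>S'. S \<subseteq>\<^sub>m S' \<longrightarrow> satisfies_clause S' (f e) = (S' x = Some True)" if e: "e \<in> M" for e
  proof -
    obtain i j where a: "adjacent I V rt par i j" and e_ij: "e = {rt i, rt j}"
      and "f e = half_path V rt par i j \<or> f e = half_path V rt par j i" using f e by blast
    then consider "f e = half_path V rt par i j" | "f e = half_path V rt par j i" by blast
    then show ?thesis
    proof cases
      case 1
      have "\<forall>S'. S \<subseteq>\<^sub>m S' \<longrightarrow> satisfies_clause S' (f e) = (S' (rt i) = Some True)"
        using 1 extension_satisfies_half_path_iff[OF e a e_ij] by simp
      moreover have "rt i \<in> e" using e_ij by simp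
      ultimately show ?thesis by blast
    next
      case 2
      have "\<forall>S'. S \<subseteq>\<^sub>m S' \<longrightarrow> satisfies_clause S' (f e) = (S' (rt j) = Some True)"
        using 2 extension_satisfies_half_path_iff[OF e adjacent_sym[OF a]] e_ij by (simp add: insert_commute)
      moreover have "rt j \<in> e" using e_ij by simp
      ultimately show ?thesis by blast
    qed
  qed
  then obtain r where r_in: "\<forall>e\<in>M. r e \<in> e"
    and r_iff: "\<And>e S'. e \<in> M \<Longrightarrow> S \<subseteq>\<^sub>m S' \<Longrightarrow> satisfies_clause S' (f e) = (S' (r e) = Some True)"
    by metis
  show ?thesis
  proof (rule that[OF r_in])
    show "satisfies_cnf S' \<phi> \<longleftrightarrow> (\<forall>e\<in>M. S' (r e) = Some True)" if "S \<subseteq>\<^sub>m S'" for S'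
      using r_iff[OF _ that] unfolding \<phi> satisfies_cnf_def by simp
  qed
qed

lemma EC_eq_true_matched_roots:
  "EC I V rt par S = {S'. dom S' = VH I V \<and> S \<subseteq>\<^sub>m S' \<and> (\<forall>e\<in>M. {v \<in> \<Union>M. S' v = Some True} \<inter> e \<noteq> {})}"
proof (rule set_eqI)
  fix S'
  have "S' \<in> EC I V rt par S \<longleftrightarrow> dom S' = VH I V \<and> S \<subseteq>\<^sub>m S' \<and> satisfies_cnf S' (phiH I V rt par)"
    unfolding EC_def SAT_def by blast
  also have "\<dots> \<longleftrightarrow> dom S' = VH I V \<and> S \<subseteq>\<^sub>m S' \<and> (\<forall>e\<in>M. \<exists>v\<in>e. S' v = Some True)"
    using extension_satisfies_phiH_iff by blast
  also have "\<dots> \<longleftrightarrow> dom S' = VH I V \<and> S \<subseteq>\<^sub>m S' \<and> (\<forall>e\<in>M. {v \<in> \<Union>M. S' v = Some True} \<inter> e \<noteq> {})"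
    by blast
  finally show "S' \<in> EC I V rt par S \<longleftrightarrow> S' \<in> {S'. dom S' = VH I V \<and> S \<subseteq>\<^sub>m S' \<and>
      (\<forall>e\<in>M. {v \<in> \<Union>M. S' v = Some True} \<inter> e \<noteq> {})}" by simp
qed

lemma card_EC: "card (EC I V rt par S) = 3 ^ card M"
proof -
  have "card (EC I V rt par S) = card {T. T \<subseteq> \<Union>M \<and> (\<forall>e\<in>M. T \<inter> e \<noteq> {})}"
    unfolding EC_eq_true_matched_roots
    using card_extensions_by_true_set[OF dom_S matched_subset_VH, where P = "\<lambda>T. \<forall>e\<in>M. T \<inter> e \<noteq> {}"]
    by simp
  also have "\<dots> = (\<Prod>e\<in>M. card {U. U \<subseteq> e \<and> U \<noteq> {}})"
    by (rule card_subsets_blockwise[OF finite_M disjoint_M])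
  also have "\<dots> = (\<Prod>e\<in>M. 3)"
    using card_matched card_nonempty_subsets_of_pair by (intro prod.cong) auto
  finally show ?thesis by simp
qed

lemma card_ES_inter_EC:
  assumes "\<phi> \<in> CNFs I V rt par M"
  shows "card (ES I V rt par \<phi> \<inter> EC I V rt par S) = 2 ^ card M"
proof -
  obtain r where r: "\<forall>e\<in>M. r e \<in> e"
    and sat_\<phi>: "\<And>S'. S \<subseteq>\<^sub>m S' \<Longrightarrow> satisfies_cnf S' \<phi> \<longleftrightarrow> (\<forall>e\<in>M. S' (r e) = Some True)"
    using CNFs_chosen_roots[OF assms] by blast
  let ?true = "\<lambda>S'. {v \<in> \<Union>M. S' v = Some True}"
  have membership: "S' \<in> ES I V rt par \<phi> \<inter> EC I V rt par S \<longleftrightarrow>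
      dom S' = VH I V \<and> S \<subseteq>\<^sub>m S' \<and> (\<forall>e\<in>M. r e \<in> ?true S' \<inter> e)" for S'
  proof -
    have "S' \<in> ES I V rt par \<phi> \<inter> EC I V rt par S \<longleftrightarrow> S' \<in> EC I V rt par S \<and> satisfies_cnf S' \<phi>"
      unfolding ES_def EC_def by blast
    also have "\<dots> \<longleftrightarrow> dom S' = VH I V \<and> S \<subseteq>\<^sub>m S' \<and> (\<forall>e\<in>M. ?true S' \<inter> e \<noteq> {})
        \<and> (\<forall>e\<in>M. S' (r e) = Some True)"
      unfolding EC_eq_true_matched_roots using sat_\<phi> by blast
    also have "\<dots> \<longleftrightarrow> dom S' = VH I V \<and> S \<subseteq>\<^sub>m S' \<and> (\<forall>e\<in>M. r e \<in> ?true S' \<inter> e)"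
      using r by blast
    finally show ?thesis .
  qed
  have "ES I V rt par \<phi> \<inter> EC I V rt par S =
      {S'. dom S' = VH I V \<and> S \<subseteq>\<^sub>m S' \<and> (\<forall>e\<in>M. r e \<in> ?true S' \<inter> e)}"
    by (rule set_eqI) (simp only: membership mem_Collect_eq)
  then have "card (ES I V rt par \<phi> \<inter> EC I V rt par S) = card {T. T \<subseteq> \<Union>M \<and> (\<forall>e\<in>M. r e \<in> T \<inter> e)}"
    using card_extensions_by_true_set[OF dom_S matched_subset_VH, where P = "\<lambda>T. \<forall>e\<in>M. r e \<in> T \<inter> e"]
    by simp
  also have "\<dots> = (\<Prod>e\<in>M. card {U. U \<subseteq> e \<and> r e \<in> U})"
    by (rule card_subsets_blockwise[OF finite_M disjoint_M])
  also have "\<dots> = (\<Prod>e\<in>M. 2)"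
    using card_matched r by (intro prod.cong refl card_subsets_of_pair_containing) auto
  finally show ?thesis by simp
qed

end

theorem lemma13:
  fixes I :: "'i set" and V :: "'i \<Rightarrow> 'v set" and rt :: "'i \<Rightarrow> 'v"
    and par :: "'i \<Rightarrow> 'v \<Rightarrow> 'v"
    and M :: "'v set set" and S :: "'v \<rightharpoonup> bool" and \<phi> :: "'v set set"
  assumes "btbg I V rt par"
    and "pseudomatching I V rt par M"
    and "dom S = VH I V - \<Union>M"
    and "comfortable1 I V rt par S M"
    and "\<phi> \<in> CNFs I V rt par M"
  shows "cond_Pr I V rt par (ES I V rt par \<phi>) (EC I V rt par S) = (2/3) ^ card M"
proof -
  interpret comfortable_assignment I V rt par M S
    using assms(1-4) by unfold_locales
  have "card (EC I V rt par S) > 0" by (simp add: card_EC)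
  then have nonempty: "EC I V rt par S \<noteq> {}" by auto
  have "cond_Pr I V rt par (ES I V rt par \<phi>) (EC I V rt par S)
      = card (ES I V rt par \<phi> \<inter> EC I V rt par S) / card (EC I V rt par S)"
    by (rule cond_Pr_constant_weight[where c = "weight I V rt par S", OF finite_SAT[OF finite_VH] _ nonempty])
      (auto simp: EC_def intro: weight_extension)
  also have "\<dots> = 2 ^ card M / 3 ^ card M" by (simp add: card_ES_inter_EC[OF assms(5)] card_EC)
  also have "\<dots> = (2/3) ^ card M" by (simp add: power_divide)
  finally show ?thesis .
qed

end
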